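(* Let $\mathcal V$ be a congruence-modular variety and $A\in\mathcal V$ such that $[\theta,\nabla_A]_A=\theta$ for all $\theta\in\mathrm{Con}(A)$. Then $A/\theta^\perp$ is semiprime for every $\theta\in\mathrm{Con}(A)$ if and only if $A$ is semiprime.
   Context: For an algebra $M$, $\mathrm{Con}(M)$ is its congruence lattice with bottom $\Delta_M$ and top $\nabla_M=M^2$, and $[\cdot,\cdot]_M$ is the term condition commutator: for $\alpha,\beta,\mu\in\mathrm{Con}(M)$, $C(\alpha,\beta;\mu)$ means that for all $n,k$, every $(n+k)$-ary term $t$, all $(a_i,b_i)\in\alpha$ and $(c_j,d_j)\in\beta$: $(t(\bar a,\bar c),t(\bar a,\bar d))\in\mu$ iff $(t(\bar b,\bar c),t(\bar b,\bar d))\in\mu$; $[\alpha,\beta]_M=\bigcap\{\mu: C(\alpha,\beta;\mu)\}$. A congruence $\phi\neq\nabla_M$ is prime if $[\alpha,\beta]_M\subseteq\phi$ implies $\alpha\subseteq\phi$ or $\beta\subseteq\phi$; $\rho_M(\theta)$ is the intersection of all prime congruences containing $\theta$ (equal to $\nabla_M$ if there are none); $M$ is semiprime if $\rho_M(\Delta_M)=\Delta_M$. For $\beta\in\mathrm{Con}(A)$, $\beta^\perp=\bigvee\{\alpha\in\mathrm{Con}(A):[\alpha,\beta]_A=\Delta_A\}$. *)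

theory Defs
  imports Main
begin

record ('f, 'a) alg =
  carrier :: "'a set"
  ops :: "'f \<Rightarrow> 'a list \<Rightarrow> 'a"

definition algebra :: "('f \<Rightarrow> nat) \<Rightarrow> ('f, 'a) alg \<Rightarrow> bool" where
  "algebra ar M \<longleftrightarrow> carrier M \<noteq> {} \<and>
     (\<forall>f xs. length xs = ar f \<and> set xs \<subseteq> carrier M \<longrightarrow> ops M f xs \<in> carrier M)"

datatype 'f trm = Var nat | Fn 'f "'f trm list"

fun wf_trm :: "('f \<Rightarrow> nat) \<Rightarrow> 'f trm \<Rightarrow> bool" where
  "wf_trm ar (Var i) = True"
| "wf_trm ar (Fn f ts) = (length ts = ar f \<and> (\<forall>t\<in>set ts. wf_trm ar t))"

fun vars :: "'f trm \<Rightarrow> nat set" where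
  "vars (Var i) = {i}"
| "vars (Fn f ts) = (\<Union>t\<in>set ts. vars t)"

fun eval :: "('f, 'a) alg \<Rightarrow> (nat \<Rightarrow> 'a) \<Rightarrow> 'f trm \<Rightarrow> 'a" where
  "eval M v (Var i) = v i"
| "eval M v (Fn f ts) = ops M f (map (eval M v) ts)"

definition Delta :: "('f, 'a) alg \<Rightarrow> 'a rel" where
  "Delta M = Id_on (carrier M)"

definition Nabla :: "('f, 'a) alg \<Rightarrow> 'a rel" where
  "Nabla M = carrier M \<times> carrier M"

definition congruence :: "('f \<Rightarrow> nat) \<Rightarrow> ('f, 'a) alg \<Rightarrow> 'a rel \<Rightarrow> bool" where
  "congruence ar M \<theta> \<longleftrightarrow> equiv (carrier M) \<theta> \<and>
     (\<forall>f xs ys. length xs = ar f \<and> length ys = ar f \<and> list_all2 (\<lambda>x y. (x, y) \<in> \<theta>) xs ys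
        \<longrightarrow> (ops M f xs, ops M f ys) \<in> \<theta>)"

definition Con :: "('f \<Rightarrow> nat) \<Rightarrow> ('f, 'a) alg \<Rightarrow> 'a rel set" where
  "Con ar M = {\<theta>. congruence ar M \<theta>}"

definition Cg :: "('f \<Rightarrow> nat) \<Rightarrow> ('f, 'a) alg \<Rightarrow> 'a rel \<Rightarrow> 'a rel" where
  "Cg ar M R = \<Inter>{\<theta> \<in> Con ar M. R \<subseteq> \<theta>}"

definition con_join :: "('f \<Rightarrow> nat) \<Rightarrow> ('f, 'a) alg \<Rightarrow> 'a rel \<Rightarrow> 'a rel \<Rightarrow> 'a rel" where
  "con_join ar M \<alpha> \<beta> = Cg ar M (\<alpha> \<union> \<beta>)"

definition cong_modular :: "('f \<Rightarrow> nat) \<Rightarrow> ('f, 'a) alg \<Rightarrow> bool" where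
  "cong_modular ar M \<longleftrightarrow> (\<forall>\<alpha>\<in>Con ar M. \<forall>\<beta>\<in>Con ar M. \<forall>\<gamma>\<in>Con ar M. \<alpha> \<subseteq> \<gamma> \<longrightarrow>
      con_join ar M \<alpha> (\<beta> \<inter> \<gamma>) = con_join ar M \<alpha> \<beta> \<inter> \<gamma>)"

definition env2 :: "nat \<Rightarrow> (nat \<Rightarrow> 'a) \<Rightarrow> (nat \<Rightarrow> 'a) \<Rightarrow> nat \<Rightarrow> 'a" where
  "env2 n a c = (\<lambda>i. if i < n then a i else c (i - n))"

definition TC :: "('f \<Rightarrow> nat) \<Rightarrow> ('f, 'a) alg \<Rightarrow> 'a rel \<Rightarrow> 'a rel \<Rightarrow> 'a rel \<Rightarrow> bool" where
  "TC ar M \<alpha> \<beta> \<mu> \<longleftrightarrow>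
    (\<forall>n k t a b c d. wf_trm ar t \<and> vars t \<subseteq> {..<n + k} \<and>
       (\<forall>i<n. (a i, b i) \<in> \<alpha>) \<and> (\<forall>j<k. (c j, d j) \<in> \<beta>) \<longrightarrow>
       ((eval M (env2 n a c) t, eval M (env2 n a d) t) \<in> \<mu> \<longleftrightarrow>
        (eval M (env2 n b c) t, eval M (env2 n b d) t) \<in> \<mu>))"

definition commutator :: "('f \<Rightarrow> nat) \<Rightarrow> ('f, 'a) alg \<Rightarrow> 'a rel \<Rightarrow> 'a rel \<Rightarrow> 'a rel" where
  "commutator ar M \<alpha> \<beta> = \<Inter>{\<mu> \<in> Con ar M. TC ar M \<alpha> \<beta> \<mu>}"

definition prime_con :: "('f \<Rightarrow> nat) \<Rightarrow> ('f, 'a) alg \<Rightarrow> 'a rel \<Rightarrow> bool" where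
  "prime_con ar M \<phi> \<longleftrightarrow> \<phi> \<in> Con ar M \<and> \<phi> \<noteq> Nabla M \<and>
     (\<forall>\<alpha>\<in>Con ar M. \<forall>\<beta>\<in>Con ar M. commutator ar M \<alpha> \<beta> \<subseteq> \<phi> \<longrightarrow> \<alpha> \<subseteq> \<phi> \<or> \<beta> \<subseteq> \<phi>)"

text \<open>Intersection of all primes above theta; equals Nabla when there are none.\<close>
definition radical :: "('f \<Rightarrow> nat) \<Rightarrow> ('f, 'a) alg \<Rightarrow> 'a rel \<Rightarrow> 'a rel" where
  "radical ar M \<theta> = Nabla M \<inter> \<Inter>{\<phi>. prime_con ar M \<phi> \<and> \<theta> \<subseteq> \<phi>}"

definition semiprime :: "('f \<Rightarrow> nat) \<Rightarrow> ('f, 'a) alg \<Rightarrow> bool" where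
  "semiprime ar M \<longleftrightarrow> radical ar M (Delta M) = Delta M"

definition annihilator :: "('f \<Rightarrow> nat) \<Rightarrow> ('f, 'a) alg \<Rightarrow> 'a rel \<Rightarrow> 'a rel" where
  "annihilator ar M \<beta> = Cg ar M (\<Union>{\<alpha> \<in> Con ar M. commutator ar M \<alpha> \<beta> = Delta M})"

definition quot_alg :: "('f, 'a) alg \<Rightarrow> 'a rel \<Rightarrow> ('f, 'a set) alg" where
  "quot_alg M \<theta> = \<lparr> carrier = carrier M // \<theta>,
     ops = (\<lambda>f Xs. \<theta> `` {ops M f (map (\<lambda>X. SOME x. x \<in> X) Xs)}) \<rparr>"

definition satisfies :: "('f, 'a) alg \<Rightarrow> ('f trm \<times> 'f trm) set \<Rightarrow> bool" where
  "satisfies M \<Sigma> \<longleftrightarrow> (\<forall>(s, t)\<in>\<Sigma>. \<forall>v. (\<forall>i. v i \<in> carrier M) \<longrightarrow> eval M v s = eval M v t)"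

end

theory Submission
  imports Defs
begin

text \<open>
  Preimages of congruences of \<open>A/\<psi>\<close> satisfy the term condition whenever the
  congruences do, so the commutator of two preimages lies in the preimage of their commutator;
  hence prime congruences above \<open>\<psi>\<close> correspond to prime congruences of \<open>A/\<psi>\<close>, and
  \<open>A/\<psi>\<close> is semiprime as soon as \<open>\<psi>\<close> is an intersection of primes.
  If \<open>A\<close> is semiprime this holds for \<open>\<psi> = \<theta>\<^sup>\<perp>\<close>: every prime not containing
  \<open>\<theta>\<close> contains \<open>\<theta>\<^sup>\<perp>\<close>, and the intersection \<open>\<rho>\<close> of these primes satisfies
  \<open>[\<rho>, \<theta>] \<subseteq> \<phi>\<close> for every prime \<open>\<phi>\<close>, so \<open>[\<rho>, \<theta>] = \<Delta>\<close> and \<open>\<rho> \<subseteq> \<theta>\<^sup>\<perp>\<close>.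
  Conversely \<open>[\<alpha>, \<nabla>] = \<alpha>\<close> gives \<open>\<nabla>\<^sup>\<perp> = \<Delta>\<close>, and semiprimeness passes from
  \<open>A/\<Delta>\<close> back to \<open>A\<close>.
\<close>

lemma Con_subset_Nabla: "\<theta> \<in> Con ar M \<Longrightarrow> \<theta> \<subseteq> Nabla M"
  by (auto simp: Con_def congruence_def equiv_def Nabla_def refl_on_def)

lemma Con_equiv: "\<theta> \<in> Con ar M \<Longrightarrow> equiv (carrier M) \<theta>"
  by (simp add: Con_def congruence_def)

lemma Con_refl: "\<theta> \<in> Con ar M \<Longrightarrow> x \<in> carrier M \<Longrightarrow> (x, x) \<in> \<theta>"
  using Con_equiv equiv_class_self by fastforce

lemma Con_sym: "\<theta> \<in> Con ar M \<Longrightarrow> (x, y) \<in> \<theta> \<Longrightarrow> (y, x) \<in> \<theta>"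
  using Con_equiv by (blast elim: equivE symE)

lemma Con_trans: "\<theta> \<in> Con ar M \<Longrightarrow> (x, y) \<in> \<theta> \<Longrightarrow> (y, z) \<in> \<theta> \<Longrightarrow> (x, z) \<in> \<theta>"
  using Con_equiv by (blast elim: equivE transE)

lemma Con_ops:
  "\<theta> \<in> Con ar M \<Longrightarrow> length xs = ar f \<Longrightarrow> length ys = ar f \<Longrightarrow>
   list_all2 (\<lambda>x y. (x, y) \<in> \<theta>) xs ys \<Longrightarrow> (ops M f xs, ops M f ys) \<in> \<theta>"
  by (simp add: Con_def congruence_def)

lemma Delta_subset_Con: "\<theta> \<in> Con ar M \<Longrightarrow> Delta M \<subseteq> \<theta>"
  by (auto simp: Delta_def Con_refl)

lemma list_all2_in_Nabla:
  "list_all2 (\<lambda>x y. (x, y) \<in> Nabla M) xs ys \<longleftrightarrow>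
   length xs = length ys \<and> set xs \<subseteq> carrier M \<and> set ys \<subseteq> carrier M"
  by (induction xs arbitrary: ys) (fastforce simp: Nabla_def list_all2_Cons1 Suc_length_conv)+

lemma list_all2_in_Delta:
  "list_all2 (\<lambda>x y. (x, y) \<in> Delta M) xs ys \<longleftrightarrow> xs = ys \<and> set xs \<subseteq> carrier M"
  by (induction xs arbitrary: ys) (auto simp: Delta_def list_all2_Cons1)

lemma Nabla_Con: "algebra ar M \<Longrightarrow> Nabla M \<in> Con ar M"
  by (auto simp: Con_def congruence_def algebra_def list_all2_in_Nabla)
     (auto simp: Nabla_def equiv_def refl_on_def sym_def trans_def)

lemma Delta_Con: "algebra ar M \<Longrightarrow> Delta M \<in> Con ar M"
  by (auto simp: Con_def congruence_def algebra_def list_all2_in_Delta)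
     (auto simp: Delta_def equiv_def refl_on_def sym_def trans_def)

lemma Inter_Con:
  assumes "algebra ar M" and "S \<subseteq> Con ar M"
  shows "Nabla M \<inter> \<Inter>S \<in> Con ar M"
proof -
  let ?T = "insert (Nabla M) S"
  have T: "?T \<subseteq> Con ar M"
    using assms Nabla_Con by blast
  have "equiv (carrier M) (\<Inter>?T)"
    using T Con_subset_Nabla[of "Nabla M"]
    by (intro equivI refl_onI symI transI)
      (auto simp: Nabla_def intro: Con_refl Con_sym Con_trans)
  moreover have "(ops M f xs, ops M f ys) \<in> \<Inter>?T"
    if "length xs = ar f" "length ys = ar f" "list_all2 (\<lambda>x y. (x, y) \<in> \<Inter>?T) xs ys" for f xs ys
    using that T by (blast intro: Con_ops list_all2_mono)
  ultimately show ?thesis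
    by (simp add: Con_def congruence_def)
qed

lemma Cg_Con:
  assumes M: "algebra ar M" and "R \<subseteq> Nabla M"
  shows "Cg ar M R \<in> Con ar M"
proof -
  have "Nabla M \<in> {\<theta> \<in> Con ar M. R \<subseteq> \<theta>}"
    using Nabla_Con[OF M] \<open>R \<subseteq> Nabla M\<close> by simp
  then have "Cg ar M R = Nabla M \<inter> \<Inter>{\<theta> \<in> Con ar M. R \<subseteq> \<theta>}"
    unfolding Cg_def by blast
  also have "\<dots> \<in> Con ar M"
    by (rule Inter_Con[OF M]) blast
  finally show ?thesis .
qed

lemma Cg_least: "\<theta> \<in> Con ar M \<Longrightarrow> R \<subseteq> \<theta> \<Longrightarrow> Cg ar M R \<subseteq> \<theta>"
  unfolding Cg_def by auto

lemma Cg_upper: "R \<subseteq> Cg ar M R"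
  unfolding Cg_def by auto

lemma eval_in_carrier:
  "algebra ar M \<Longrightarrow> wf_trm ar t \<Longrightarrow> \<forall>i\<in>vars t. v i \<in> carrier M \<Longrightarrow> eval M v t \<in> carrier M"
proof (induction t)
  case (Fn f ts)
  then have "set (map (eval M v) ts) \<subseteq> carrier M" by auto
  with Fn.prems show ?case by (simp add: algebra_def)
qed simp

lemma eval_Con:
  "\<theta> \<in> Con ar M \<Longrightarrow> wf_trm ar t \<Longrightarrow> \<forall>i\<in>vars t. (v i, w i) \<in> \<theta> \<Longrightarrow>
   (eval M v t, eval M w t) \<in> \<theta>"
proof (induction t)
  case (Fn f ts)
  then have "list_all2 (\<lambda>x y. (x, y) \<in> \<theta>) (map (eval M v) ts) (map (eval M w) ts)"
    by (auto simp: list_all2_conv_all_nth)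
  with Fn.prems show ?case by (auto intro: Con_ops)
qed simp

lemma eval_env2_Con:
  assumes "\<theta> \<in> Con ar M" "wf_trm ar t" "vars t \<subseteq> {..<n + k}"
    and "\<forall>i<n. (a i, b i) \<in> \<theta>" "\<forall>j<k. (c j, d j) \<in> \<theta>"
  shows "(eval M (env2 n a c) t, eval M (env2 n b d) t) \<in> \<theta>"
  using assms by (intro eval_Con) (auto simp: env2_def)

lemma TC_left:
  assumes \<alpha>: "\<alpha> \<in> Con ar M" and \<beta>: "\<beta> \<subseteq> Nabla M"
  shows "TC ar M \<alpha> \<beta> \<alpha>"
  unfolding TC_def
proof (intro allI impI)
  fix n k t a b c d
  assume h: "wf_trm ar t \<and> vars t \<subseteq> {..<n + k} \<and> (\<forall>i<n. (a i, b i) \<in> \<alpha>) \<and> (\<forall>j<k. (c j, d j) \<in> \<beta>)"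
  have "\<forall>j<k. (c j, c j) \<in> \<alpha> \<and> (d j, d j) \<in> \<alpha>"
    using h \<beta> Con_refl[OF \<alpha>] by (auto simp: Nabla_def)
  then have "(eval M (env2 n a c) t, eval M (env2 n b c) t) \<in> \<alpha>"
    "(eval M (env2 n a d) t, eval M (env2 n b d) t) \<in> \<alpha>"
    using h eval_env2_Con[OF \<alpha>, of t n k a b] by simp_all
  then show "(eval M (env2 n a c) t, eval M (env2 n a d) t) \<in> \<alpha> \<longleftrightarrow>
      (eval M (env2 n b c) t, eval M (env2 n b d) t) \<in> \<alpha>"
    using Con_sym[OF \<alpha>] Con_trans[OF \<alpha>] by blast
qed

lemma TC_right:
  assumes \<alpha>: "\<alpha> \<subseteq> Nabla M" and \<beta>: "\<beta> \<in> Con ar M"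
  shows "TC ar M \<alpha> \<beta> \<beta>"
  unfolding TC_def
proof (intro allI impI)
  fix n k t a b c d
  assume h: "wf_trm ar t \<and> vars t \<subseteq> {..<n + k} \<and> (\<forall>i<n. (a i, b i) \<in> \<alpha>) \<and> (\<forall>j<k. (c j, d j) \<in> \<beta>)"
  have "\<forall>i<n. (a i, a i) \<in> \<beta> \<and> (b i, b i) \<in> \<beta>"
    using h \<alpha> Con_refl[OF \<beta>] by (auto simp: Nabla_def)
  then have "(eval M (env2 n a c) t, eval M (env2 n a d) t) \<in> \<beta>"
    "(eval M (env2 n b c) t, eval M (env2 n b d) t) \<in> \<beta>"
    using h eval_env2_Con[OF \<beta>, of t n k _ _ c d] by simp_all
  then show "(eval M (env2 n a c) t, eval M (env2 n a d) t) \<in> \<beta> \<longleftrightarrow>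
      (eval M (env2 n b c) t, eval M (env2 n b d) t) \<in> \<beta>"
    by simp
qed

lemma commutator_subset_left:
  "\<alpha> \<in> Con ar M \<Longrightarrow> \<beta> \<in> Con ar M \<Longrightarrow> commutator ar M \<alpha> \<beta> \<subseteq> \<alpha>"
  unfolding commutator_def by (rule Inter_lower) (simp add: TC_left Con_subset_Nabla)

lemma commutator_subset_right:
  "\<alpha> \<in> Con ar M \<Longrightarrow> \<beta> \<in> Con ar M \<Longrightarrow> commutator ar M \<alpha> \<beta> \<subseteq> \<beta>"
  unfolding commutator_def by (rule Inter_lower) (simp add: TC_right Con_subset_Nabla)

lemma Delta_subset_commutator: "Delta M \<subseteq> commutator ar M \<alpha> \<beta>"
  unfolding commutator_def by (auto dest: Delta_subset_Con)

section \<open>Quotient algebras\<close>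

definition class_rep :: "'a set \<Rightarrow> 'a" where
  "class_rep X = (SOME x. x \<in> X)"

text \<open>\<open>con_quot \<psi> \<phi>\<close> is \<open>\<phi>/\<psi>\<close>; \<open>con_lift A \<psi> \<phi>\<close> is the preimage of \<open>\<phi>\<close> under \<open>A \<rightarrow> A/\<psi>\<close>.\<close>

definition con_quot :: "'a rel \<Rightarrow> 'a rel \<Rightarrow> 'a set rel" where
  "con_quot \<psi> \<phi> = (\<lambda>(x, y). (\<psi> `` {x}, \<psi> `` {y})) ` \<phi>"

definition con_lift :: "('f, 'a) alg \<Rightarrow> 'a rel \<Rightarrow> 'a set rel \<Rightarrow> 'a rel" where
  "con_lift A \<psi> \<phi> = {(x, y). x \<in> carrier A \<and> y \<in> carrier A \<and> (\<psi> `` {x}, \<psi> `` {y}) \<in> \<phi>}"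

lemma carrier_quot_alg [simp]: "carrier (quot_alg A \<psi>) = carrier A // \<psi>"
  by (simp add: quot_alg_def)

lemma ops_quot_alg: "ops (quot_alg A \<psi>) f Xs = \<psi> `` {ops A f (map class_rep Xs)}"
  by (simp add: quot_alg_def class_rep_def [abs_def])

lemma class_in_quot_alg: "x \<in> carrier A \<Longrightarrow> \<psi> `` {x} \<in> carrier (quot_alg A \<psi>)"
  by (simp add: quotientI)

lemma class_eq_iff:
  "\<psi> \<in> Con ar A \<Longrightarrow> x \<in> carrier A \<Longrightarrow> y \<in> carrier A \<Longrightarrow> \<psi> `` {x} = \<psi> `` {y} \<longleftrightarrow> (x, y) \<in> \<psi>"
  by (rule eq_equiv_class_iff[OF Con_equiv])

lemma class_rep:
  assumes \<psi>: "\<psi> \<in> Con ar A" and X: "X \<in> carrier (quot_alg A \<psi>)"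
  shows class_rep_in_class: "class_rep X \<in> X"
    and class_rep_in_carrier: "class_rep X \<in> carrier A"
    and class_of_class_rep: "\<psi> `` {class_rep X} = X"
proof -
  from X obtain x where x: "x \<in> carrier A" "X = \<psi> `` {x}"
    unfolding carrier_quot_alg by (rule quotientE)
  then have "x \<in> X"
    using Con_refl[OF \<psi>] by blast
  then show "class_rep X \<in> X"
    unfolding class_rep_def by (rule someI)
  then have rep: "(x, class_rep X) \<in> \<psi>"
    using x(2) by blast
  then show "class_rep X \<in> carrier A"
    using Con_subset_Nabla[OF \<psi>] by (auto simp: Nabla_def)
  show "\<psi> `` {class_rep X} = X"
    using equiv_class_eq[OF Con_equiv[OF \<psi>] rep] x(2) by simp
qed

lemma class_rep_class: "\<psi> \<in> Con ar A \<Longrightarrow> x \<in> carrier A \<Longrightarrow> (class_rep (\<psi> `` {x}), x) \<in> \<psi>"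
  using class_rep_in_class[OF _ class_in_quot_alg, of \<psi> ar A x] by (blast intro: Con_sym)

lemma ops_quot_alg_classes:
  assumes \<psi>: "\<psi> \<in> Con ar A" and "length xs = ar f" and "set xs \<subseteq> carrier A"
  shows "ops (quot_alg A \<psi>) f (map (\<lambda>x. \<psi> `` {x}) xs) = \<psi> `` {ops A f xs}"
proof -
  have "list_all2 (\<lambda>x y. (x, y) \<in> \<psi>) (map class_rep (map (\<lambda>x. \<psi> `` {x}) xs)) xs"
    using assms(3) by (auto simp: list_all2_conv_all_nth intro!: class_rep_class[OF \<psi>])
  then have "(ops A f (map class_rep (map (\<lambda>x. \<psi> `` {x}) xs)), ops A f xs) \<in> \<psi>"
    using Con_ops[OF \<psi>] assms(2) by simp
  then show ?thesis
    using equiv_class_eq[OF Con_equiv[OF \<psi>]] by (simp add: ops_quot_alg)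
qed

lemma eval_quot_alg:
  assumes A: "algebra ar A" and \<psi>: "\<psi> \<in> Con ar A"
  shows "wf_trm ar t \<Longrightarrow> \<forall>i\<in>vars t. w i \<in> carrier A \<and> v i = \<psi> `` {w i} \<Longrightarrow>
    eval (quot_alg A \<psi>) v t = \<psi> `` {eval A w t}"
proof (induction t)
  case (Fn f ts)
  then have args: "map (eval (quot_alg A \<psi>) v) ts = map (\<lambda>x. \<psi> `` {x}) (map (eval A w) ts)"
    and "set (map (eval A w) ts) \<subseteq> carrier A"
    using eval_in_carrier[OF A] by auto
  with Fn.prems show ?case
    using ops_quot_alg_classes[OF \<psi>, of "map (eval A w) ts" f] by (simp only: eval.simps args) simp
qed simp

lemma con_quot_subset: "\<phi> \<in> Con ar A \<Longrightarrow> con_quot \<psi> \<phi> \<subseteq> Nabla (quot_alg A \<psi>)"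
  unfolding con_quot_def using Con_subset_Nabla[of \<phi> ar A]
  by (auto simp: Nabla_def intro!: quotientI)

lemma con_quot_iff:
  assumes \<psi>: "\<psi> \<in> Con ar A" and \<phi>: "\<phi> \<in> Con ar A" and "\<psi> \<subseteq> \<phi>"
    and X: "X \<in> carrier (quot_alg A \<psi>)" and Y: "Y \<in> carrier (quot_alg A \<psi>)"
  shows "(X, Y) \<in> con_quot \<psi> \<phi> \<longleftrightarrow> (class_rep X, class_rep Y) \<in> \<phi>"
proof
  assume "(X, Y) \<in> con_quot \<psi> \<phi>"
  then obtain x y where xy: "(x, y) \<in> \<phi>" "X = \<psi> `` {x}" "Y = \<psi> `` {y}"
    unfolding con_quot_def by auto
  then have "(x, class_rep X) \<in> \<phi>" "(y, class_rep Y) \<in> \<phi>"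
    using class_rep_in_class[OF \<psi> X] class_rep_in_class[OF \<psi> Y] \<open>\<psi> \<subseteq> \<phi>\<close> by auto
  then show "(class_rep X, class_rep Y) \<in> \<phi>"
    using xy(1) Con_sym[OF \<phi>] Con_trans[OF \<phi>] by blast
next
  assume "(class_rep X, class_rep Y) \<in> \<phi>"
  then have "(\<psi> `` {class_rep X}, \<psi> `` {class_rep Y}) \<in> con_quot \<psi> \<phi>"
    unfolding con_quot_def by force
  then show "(X, Y) \<in> con_quot \<psi> \<phi>"
    using class_of_class_rep[OF \<psi> X] class_of_class_rep[OF \<psi> Y] by simp
qed

lemma classes_in_con_quot_iff:
  assumes \<psi>: "\<psi> \<in> Con ar A" and \<phi>: "\<phi> \<in> Con ar A" and "\<psi> \<subseteq> \<phi>"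
    and x: "x \<in> carrier A" and y: "y \<in> carrier A"
  shows "(\<psi> `` {x}, \<psi> `` {y}) \<in> con_quot \<psi> \<phi> \<longleftrightarrow> (x, y) \<in> \<phi>"
proof -
  have "(class_rep (\<psi> `` {x}), x) \<in> \<phi>" "(class_rep (\<psi> `` {y}), y) \<in> \<phi>"
    using class_rep_class[OF \<psi>] x y \<open>\<psi> \<subseteq> \<phi>\<close> by auto
  then have "(class_rep (\<psi> `` {x}), class_rep (\<psi> `` {y})) \<in> \<phi> \<longleftrightarrow> (x, y) \<in> \<phi>"
    using Con_sym[OF \<phi>] Con_trans[OF \<phi>] by metis
  then show ?thesis
    using con_quot_iff[OF \<psi> \<phi> \<open>\<psi> \<subseteq> \<phi>\<close> class_in_quot_alg[OF x] class_in_quot_alg[OF y]] by simp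
qed

lemma con_quot_Con:
  assumes \<psi>: "\<psi> \<in> Con ar A" and \<phi>: "\<phi> \<in> Con ar A" and sub: "\<psi> \<subseteq> \<phi>"
  shows "con_quot \<psi> \<phi> \<in> Con ar (quot_alg A \<psi>)"
  unfolding Con_def congruence_def mem_Collect_eq
proof (intro conjI allI impI)
  let ?Q = "carrier (quot_alg A \<psi>)"
  note iff = con_quot_iff[OF \<psi> \<phi> sub]
  have sq: "con_quot \<psi> \<phi> \<subseteq> ?Q \<times> ?Q"
    using con_quot_subset[OF \<phi>] by (simp add: Nabla_def)
  show "equiv ?Q (con_quot \<psi> \<phi>)"
  proof (rule equivI)
    show "refl_on ?Q (con_quot \<psi> \<phi>)"
      using sq iff class_rep_in_carrier[OF \<psi>] Con_refl[OF \<phi>] by (auto intro!: refl_onI)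
    show "sym (con_quot \<psi> \<phi>)"
    proof (rule symI)
      fix X Y assume XY: "(X, Y) \<in> con_quot \<psi> \<phi>"
      with sq have "X \<in> ?Q" "Y \<in> ?Q" by auto
      with XY show "(Y, X) \<in> con_quot \<psi> \<phi>" using iff Con_sym[OF \<phi>] by blast
    qed
    show "trans (con_quot \<psi> \<phi>)"
    proof (rule transI)
      fix X Y Z assume XY: "(X, Y) \<in> con_quot \<psi> \<phi>" and YZ: "(Y, Z) \<in> con_quot \<psi> \<phi>"
      with sq have Q: "X \<in> ?Q" "Y \<in> ?Q" "Z \<in> ?Q" by auto
      with XY YZ iff have "(class_rep X, class_rep Y) \<in> \<phi>" "(class_rep Y, class_rep Z) \<in> \<phi>"
        by auto
      then have "(class_rep X, class_rep Z) \<in> \<phi>" by (rule Con_trans[OF \<phi>])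
      with Q iff show "(X, Z) \<in> con_quot \<psi> \<phi>" by blast
    qed
  qed (use sq in simp)
  fix f Xs Ys
  assume h: "length Xs = ar f \<and> length Ys = ar f \<and> list_all2 (\<lambda>x y. (x, y) \<in> con_quot \<psi> \<phi>) Xs Ys"
  have "list_all2 (\<lambda>x y. (x, y) \<in> \<phi>) (map class_rep Xs) (map class_rep Ys)"
    using h sq iff by (fastforce simp: list_all2_conv_all_nth)
  then have "(ops A f (map class_rep Xs), ops A f (map class_rep Ys)) \<in> \<phi>"
    using Con_ops[OF \<phi>] h by simp
  then show "(ops (quot_alg A \<psi>) f Xs, ops (quot_alg A \<psi>) f Ys) \<in> con_quot \<psi> \<phi>"
    unfolding ops_quot_alg con_quot_def by force
qed

lemma con_lift_Con:
  assumes A: "algebra ar A" and \<psi>: "\<psi> \<in> Con ar A" and \<phi>: "\<phi> \<in> Con ar (quot_alg A \<psi>)"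
  shows "con_lift A \<psi> \<phi> \<in> Con ar A"
  unfolding Con_def congruence_def mem_Collect_eq
proof (intro conjI allI impI)
  show "equiv (carrier A) (con_lift A \<psi> \<phi>)"
  proof (rule equivI)
    show "refl_on (carrier A) (con_lift A \<psi> \<phi>)"
      using Con_refl[OF \<phi> class_in_quot_alg] by (auto simp: con_lift_def intro!: refl_onI)
    show "sym (con_lift A \<psi> \<phi>)"
      using Con_sym[OF \<phi>] by (auto simp: con_lift_def intro!: symI)
    show "trans (con_lift A \<psi> \<phi>)"
      using Con_trans[OF \<phi>] by (auto simp: con_lift_def intro!: transI)
  qed (auto simp: con_lift_def)
  fix f xs ys
  assume h: "length xs = ar f \<and> length ys = ar f \<and> list_all2 (\<lambda>x y. (x, y) \<in> con_lift A \<psi> \<phi>) xs ys"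
  then have "list_all2 (\<lambda>x y. (x, y) \<in> Nabla A) xs ys"
    by (auto simp: con_lift_def Nabla_def elim: list_all2_mono)
  then have carr: "set xs \<subseteq> carrier A" "set ys \<subseteq> carrier A"
    by (simp_all add: list_all2_in_Nabla)
  have "list_all2 (\<lambda>x y. (x, y) \<in> \<phi>) (map (\<lambda>x. \<psi> `` {x}) xs) (map (\<lambda>x. \<psi> `` {x}) ys)"
    using h by (auto simp: list_all2_conv_all_nth con_lift_def)
  then have "(ops (quot_alg A \<psi>) f (map (\<lambda>x. \<psi> `` {x}) xs),
              ops (quot_alg A \<psi>) f (map (\<lambda>x. \<psi> `` {x}) ys)) \<in> \<phi>"
    using Con_ops[OF \<phi>] h by simp
  then have "(\<psi> `` {ops A f xs}, \<psi> `` {ops A f ys}) \<in> \<phi>"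
    using ops_quot_alg_classes[OF \<psi>] h carr by simp
  moreover have "ops A f xs \<in> carrier A" "ops A f ys \<in> carrier A"
    using A h carr unfolding algebra_def by blast+
  ultimately show "(ops A f xs, ops A f ys) \<in> con_lift A \<psi> \<phi>"
    unfolding con_lift_def by simp
qed

lemma con_lift_con_quot:
  assumes \<psi>: "\<psi> \<in> Con ar A" and \<phi>: "\<phi> \<in> Con ar A" and sub: "\<psi> \<subseteq> \<phi>"
  shows "con_lift A \<psi> (con_quot \<psi> \<phi>) = \<phi>"
  using classes_in_con_quot_iff[OF \<psi> \<phi> sub] Con_subset_Nabla[OF \<phi>]
  by (auto simp: con_lift_def Nabla_def)

lemma con_quot_con_lift:
  assumes \<psi>: "\<psi> \<in> Con ar A" and \<phi>: "\<phi> \<in> Con ar (quot_alg A \<psi>)"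
  shows "con_quot \<psi> (con_lift A \<psi> \<phi>) = \<phi>"
proof
  show "con_quot \<psi> (con_lift A \<psi> \<phi>) \<subseteq> \<phi>"
    unfolding con_quot_def con_lift_def by auto
  show "\<phi> \<subseteq> con_quot \<psi> (con_lift A \<psi> \<phi>)"
  proof (clarify)
    fix X Y assume XY: "(X, Y) \<in> \<phi>"
    then have Q: "X \<in> carrier (quot_alg A \<psi>)" "Y \<in> carrier (quot_alg A \<psi>)"
      using Con_subset_Nabla[OF \<phi>] by (auto simp: Nabla_def)
    then have "(class_rep X, class_rep Y) \<in> con_lift A \<psi> \<phi>"
      using XY class_rep_in_carrier[OF \<psi>] class_of_class_rep[OF \<psi>] by (simp add: con_lift_def)
    then have "(\<psi> `` {class_rep X}, \<psi> `` {class_rep Y}) \<in> con_quot \<psi> (con_lift A \<psi> \<phi>)"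
      unfolding con_quot_def by force
    then show "(X, Y) \<in> con_quot \<psi> (con_lift A \<psi> \<phi>)"
      using class_of_class_rep[OF \<psi>] Q by simp
  qed
qed

lemma con_lift_Nabla: "con_lift A \<psi> (Nabla (quot_alg A \<psi>)) = Nabla A"
  by (auto simp: con_lift_def Nabla_def intro: quotientI)

lemma con_quot_Nabla:
  assumes \<psi>: "\<psi> \<in> Con ar A"
  shows "con_quot \<psi> (Nabla A) = Nabla (quot_alg A \<psi>)"
proof
  show "con_quot \<psi> (Nabla A) \<subseteq> Nabla (quot_alg A \<psi>)"
    by (auto simp: con_quot_def Nabla_def intro: quotientI)
  show "Nabla (quot_alg A \<psi>) \<subseteq> con_quot \<psi> (Nabla A)"
  proof (clarify)
    fix X Y assume "(X, Y) \<in> Nabla (quot_alg A \<psi>)"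
    then have Q: "X \<in> carrier (quot_alg A \<psi>)" "Y \<in> carrier (quot_alg A \<psi>)"
      by (auto simp: Nabla_def)
    then have "(\<psi> `` {class_rep X}, \<psi> `` {class_rep Y}) \<in> con_quot \<psi> (Nabla A)"
      using class_rep_in_carrier[OF \<psi>] unfolding con_quot_def Nabla_def by force
    then show "(X, Y) \<in> con_quot \<psi> (Nabla A)"
      using class_of_class_rep[OF \<psi>] Q by simp
  qed
qed

lemma con_lift_mono: "\<alpha> \<subseteq> \<beta> \<Longrightarrow> con_lift A \<psi> \<alpha> \<subseteq> con_lift A \<psi> \<beta>"
  unfolding con_lift_def by auto

lemma con_quot_mono: "\<alpha> \<subseteq> \<beta> \<Longrightarrow> con_quot \<psi> \<alpha> \<subseteq> con_quot \<psi> \<beta>"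
  unfolding con_quot_def by auto

lemma eval_env2_quot_alg:
  assumes "algebra ar A" and "\<psi> \<in> Con ar A" and "wf_trm ar t" and "vars t \<subseteq> {..<n + k}"
    and "\<forall>i<n. x i \<in> carrier A \<and> X i = \<psi> `` {x i}"
    and "\<forall>j<k. y j \<in> carrier A \<and> Y j = \<psi> `` {y j}"
  shows "eval (quot_alg A \<psi>) (env2 n X Y) t = \<psi> `` {eval A (env2 n x y) t}"
  using assms by (intro eval_quot_alg) (auto simp: env2_def)

lemma eval_env2_in_carrier:
  assumes "algebra ar A" and "wf_trm ar t" and "vars t \<subseteq> {..<n + k}"
    and "\<forall>i<n. x i \<in> carrier A" and "\<forall>j<k. y j \<in> carrier A"
  shows "eval A (env2 n x y) t \<in> carrier A"
  using assms by (intro eval_in_carrier) (auto simp: env2_def)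

lemma TC_con_lift:
  assumes A: "algebra ar A" and \<psi>: "\<psi> \<in> Con ar A"
    and tc: "TC ar (quot_alg A \<psi>) \<alpha> \<beta> \<mu>"
  shows "TC ar A (con_lift A \<psi> \<alpha>) (con_lift A \<psi> \<beta>) (con_lift A \<psi> \<mu>)"
  unfolding TC_def
proof (intro allI impI)
  fix n k t a b c d
  assume h: "wf_trm ar t \<and> vars t \<subseteq> {..<n + k} \<and> (\<forall>i<n. (a i, b i) \<in> con_lift A \<psi> \<alpha>) \<and>
    (\<forall>j<k. (c j, d j) \<in> con_lift A \<psi> \<beta>)"
  let ?Q = "quot_alg A \<psi>" and ?cls = "\<lambda>x i. \<psi> `` {x i}"
  have carr: "\<forall>i<n. a i \<in> carrier A" "\<forall>i<n. b i \<in> carrier A"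
    "\<forall>j<k. c j \<in> carrier A" "\<forall>j<k. d j \<in> carrier A"
    using h by (auto simp: con_lift_def)
  have quot: "eval ?Q (env2 n (?cls x) (?cls y)) t = \<psi> `` {eval A (env2 n x y) t}"
    if "\<forall>i<n. x i \<in> carrier A" "\<forall>j<k. y j \<in> carrier A" for x y
    by (rule eval_env2_quot_alg[OF A \<psi>]) (use h that in auto)
  have in_carrier: "eval A (env2 n x y) t \<in> carrier A"
    if "\<forall>i<n. x i \<in> carrier A" "\<forall>j<k. y j \<in> carrier A" for x y
    by (rule eval_env2_in_carrier[OF A]) (use h that in auto)
  have "(eval ?Q (env2 n (?cls a) (?cls c)) t, eval ?Q (env2 n (?cls a) (?cls d)) t) \<in> \<mu> \<longleftrightarrow>
      (eval ?Q (env2 n (?cls b) (?cls c)) t, eval ?Q (env2 n (?cls b) (?cls d)) t) \<in> \<mu>"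
    by (rule tc[unfolded TC_def, rule_format, of t n k "?cls a" "?cls b" "?cls c" "?cls d"])
      (use h in \<open>auto simp: con_lift_def\<close>)
  then have "(\<psi> `` {eval A (env2 n a c) t}, \<psi> `` {eval A (env2 n a d) t}) \<in> \<mu>
    \<longleftrightarrow> (\<psi> `` {eval A (env2 n b c) t}, \<psi> `` {eval A (env2 n b d) t}) \<in> \<mu>"
    by (simp only: quot[OF carr(1) carr(3)] quot[OF carr(1) carr(4)]
        quot[OF carr(2) carr(3)] quot[OF carr(2) carr(4)])
  moreover note in_carrier[OF carr(1) carr(3)] in_carrier[OF carr(1) carr(4)]
    in_carrier[OF carr(2) carr(3)] in_carrier[OF carr(2) carr(4)]
  ultimately show "(eval A (env2 n a c) t, eval A (env2 n a d) t) \<in> con_lift A \<psi> \<mu> \<longleftrightarrow>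
      (eval A (env2 n b c) t, eval A (env2 n b d) t) \<in> con_lift A \<psi> \<mu>"
    unfolding con_lift_def by simp
qed

lemma commutator_con_lift_subset:
  assumes A: "algebra ar A" and \<psi>: "\<psi> \<in> Con ar A"
    and \<alpha>: "\<alpha> \<in> Con ar (quot_alg A \<psi>)" and \<beta>: "\<beta> \<in> Con ar (quot_alg A \<psi>)"
  shows "commutator ar A (con_lift A \<psi> \<alpha>) (con_lift A \<psi> \<beta>)
    \<subseteq> con_lift A \<psi> (commutator ar (quot_alg A \<psi>) \<alpha> \<beta>)"
proof (clarify)
  fix x y assume xy: "(x, y) \<in> commutator ar A (con_lift A \<psi> \<alpha>) (con_lift A \<psi> \<beta>)"
  then have "(x, y) \<in> con_lift A \<psi> \<alpha>"
    using commutator_subset_left[OF con_lift_Con[OF A \<psi> \<alpha>] con_lift_Con[OF A \<psi> \<beta>]] by blast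
  then have carr: "x \<in> carrier A" "y \<in> carrier A"
    by (auto simp: con_lift_def)
  have "(\<psi> `` {x}, \<psi> `` {y}) \<in> \<mu>"
    if "\<mu> \<in> Con ar (quot_alg A \<psi>)" "TC ar (quot_alg A \<psi>) \<alpha> \<beta> \<mu>" for \<mu>
  proof -
    have "con_lift A \<psi> \<mu> \<in> {\<mu> \<in> Con ar A. TC ar A (con_lift A \<psi> \<alpha>) (con_lift A \<psi> \<beta>) \<mu>}"
      using con_lift_Con[OF A \<psi> that(1)] TC_con_lift[OF A \<psi> that(2)] by simp
    then have "(x, y) \<in> con_lift A \<psi> \<mu>"
      using xy unfolding commutator_def by blast
    then show ?thesis
      by (simp add: con_lift_def)
  qed
  then show "(x, y) \<in> con_lift A \<psi> (commutator ar (quot_alg A \<psi>) \<alpha> \<beta>)"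
    using carr by (auto simp: con_lift_def commutator_def)
qed

lemma TC_con_quot:
  assumes A: "algebra ar A" and \<psi>: "\<psi> \<in> Con ar A"
    and \<alpha>: "\<alpha> \<in> Con ar A" "\<psi> \<subseteq> \<alpha>" and \<beta>: "\<beta> \<in> Con ar A" "\<psi> \<subseteq> \<beta>"
    and \<mu>: "\<mu> \<in> Con ar A" "\<psi> \<subseteq> \<mu>"
    and tc: "TC ar A \<alpha> \<beta> \<mu>"
  shows "TC ar (quot_alg A \<psi>) (con_quot \<psi> \<alpha>) (con_quot \<psi> \<beta>) (con_quot \<psi> \<mu>)"
  unfolding TC_def
proof (intro allI impI)
  let ?Q = "quot_alg A \<psi>" and ?r = "\<lambda>X i. class_rep (X i)"
  fix n k t a b c d
  assume h: "wf_trm ar t \<and> vars t \<subseteq> {..<n + k} \<and> (\<forall>i<n. (a i, b i) \<in> con_quot \<psi> \<alpha>) \<and>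
    (\<forall>j<k. (c j, d j) \<in> con_quot \<psi> \<beta>)"
  have Q: "\<forall>i<n. a i \<in> carrier ?Q" "\<forall>i<n. b i \<in> carrier ?Q"
    "\<forall>j<k. c j \<in> carrier ?Q" "\<forall>j<k. d j \<in> carrier ?Q"
    using h con_quot_subset[OF \<alpha>(1), of \<psi>] con_quot_subset[OF \<beta>(1), of \<psi>]
    unfolding Nabla_def by blast+
  have quot: "eval ?Q (env2 n X Y) t = \<psi> `` {eval A (env2 n (?r X) (?r Y)) t}"
    if "\<forall>i<n. X i \<in> carrier ?Q" "\<forall>j<k. Y j \<in> carrier ?Q" for X Y
    by (rule eval_env2_quot_alg[OF A \<psi>, where k = k])
      (use h that in \<open>simp_all add: class_rep_in_carrier[OF \<psi>] class_of_class_rep[OF \<psi>]\<close>)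
  have in_carrier: "eval A (env2 n (?r X) (?r Y)) t \<in> carrier A"
    if "\<forall>i<n. X i \<in> carrier ?Q" "\<forall>j<k. Y j \<in> carrier ?Q" for X Y
    by (rule eval_env2_in_carrier[OF A]) (use h that class_rep_in_carrier[OF \<psi>] in auto)
  have "(eval A (env2 n (?r a) (?r c)) t, eval A (env2 n (?r a) (?r d)) t) \<in> \<mu> \<longleftrightarrow>
      (eval A (env2 n (?r b) (?r c)) t, eval A (env2 n (?r b) (?r d)) t) \<in> \<mu>"
    by (rule tc[unfolded TC_def, rule_format, of t n k "?r a" "?r b" "?r c" "?r d"])
      (use h Q con_quot_iff[OF \<psi> \<alpha>] con_quot_iff[OF \<psi> \<beta>] in auto)
  then show "(eval ?Q (env2 n a c) t, eval ?Q (env2 n a d) t) \<in> con_quot \<psi> \<mu> \<longleftrightarrow>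
      (eval ?Q (env2 n b c) t, eval ?Q (env2 n b d) t) \<in> con_quot \<psi> \<mu>"
    by (simp only: quot[OF Q(1) Q(3)] quot[OF Q(1) Q(4)] quot[OF Q(2) Q(3)] quot[OF Q(2) Q(4)]
        classes_in_con_quot_iff[OF \<psi> \<mu> in_carrier[OF Q(1) Q(3)] in_carrier[OF Q(1) Q(4)]]
        classes_in_con_quot_iff[OF \<psi> \<mu> in_carrier[OF Q(2) Q(3)] in_carrier[OF Q(2) Q(4)]])
qed

section \<open>Prime congruences of quotients\<close>

lemma subset_radical: "\<theta> \<subseteq> Nabla M \<Longrightarrow> \<theta> \<subseteq> radical ar M \<theta>"
  unfolding radical_def by blast

lemma semiprime_iff_radical_subset:
  "semiprime ar M \<longleftrightarrow> radical ar M (Delta M) \<subseteq> Delta M"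
  using subset_radical[of "Delta M" M ar]
  unfolding semiprime_def by (auto simp: Delta_def Nabla_def)

text \<open>
  The term condition passes to \<open>A/\<psi>\<close> only for congruences \<open>\<mu> \<supseteq> \<psi>\<close>, while the
  commutator is an intersection over all \<open>\<mu>\<close>; hence the quotient here is by \<open>\<Delta>\<close>.
\<close>

lemma commutator_con_quot_Delta_subset:
  assumes A: "algebra ar A" and \<alpha>: "\<alpha> \<in> Con ar A" and \<beta>: "\<beta> \<in> Con ar A"
  shows "commutator ar (quot_alg A (Delta A)) (con_quot (Delta A) \<alpha>) (con_quot (Delta A) \<beta>)
    \<subseteq> con_quot (Delta A) (commutator ar A \<alpha> \<beta>)"
proof (clarify)
  let ?\<Delta> = "Delta A"
  let ?Q = "quot_alg A ?\<Delta>"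
  have \<Delta>: "?\<Delta> \<in> Con ar A"
    using A by (rule Delta_Con)
  fix X Y
  assume XY: "(X, Y) \<in> commutator ar ?Q (con_quot ?\<Delta> \<alpha>) (con_quot ?\<Delta> \<beta>)"
  then have "(X, Y) \<in> con_quot ?\<Delta> \<alpha>"
    using commutator_subset_left[OF con_quot_Con[OF \<Delta> \<alpha>] con_quot_Con[OF \<Delta> \<beta>]]
      Delta_subset_Con[OF \<alpha>] Delta_subset_Con[OF \<beta>] by blast
  then have Q: "X \<in> carrier ?Q" "Y \<in> carrier ?Q"
    using con_quot_subset[OF \<alpha>, of ?\<Delta>] by (auto simp: Nabla_def)
  have "(class_rep X, class_rep Y) \<in> \<mu>" if \<mu>: "\<mu> \<in> Con ar A" "TC ar A \<alpha> \<beta> \<mu>" for \<mu>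
  proof -
    have "con_quot ?\<Delta> \<mu> \<in>
        {\<mu>' \<in> Con ar ?Q. TC ar ?Q (con_quot ?\<Delta> \<alpha>) (con_quot ?\<Delta> \<beta>) \<mu>'}"
      using con_quot_Con[OF \<Delta> \<mu>(1)] Delta_subset_Con[OF \<mu>(1)]
        TC_con_quot[OF A \<Delta> \<alpha> Delta_subset_Con[OF \<alpha>] \<beta> Delta_subset_Con[OF \<beta>] \<mu>(1) _ \<mu>(2)]
      by simp
    then have "(X, Y) \<in> con_quot ?\<Delta> \<mu>"
      using XY unfolding commutator_def by blast
    then show ?thesis
      using con_quot_iff[OF \<Delta> \<mu>(1) Delta_subset_Con[OF \<mu>(1)] Q] by simp
  qed
  then have "(class_rep X, class_rep Y) \<in> commutator ar A \<alpha> \<beta>"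
    unfolding commutator_def by blast
  then have "(?\<Delta> `` {class_rep X}, ?\<Delta> `` {class_rep Y}) \<in> con_quot ?\<Delta> (commutator ar A \<alpha> \<beta>)"
    unfolding con_quot_def by force
  then show "(X, Y) \<in> con_quot ?\<Delta> (commutator ar A \<alpha> \<beta>)"
    using class_of_class_rep[OF \<Delta>] Q by simp
qed

lemma prime_con_quot:
  assumes A: "algebra ar A" and \<psi>: "\<psi> \<in> Con ar A" and \<phi>: "prime_con ar A \<phi>" and "\<psi> \<subseteq> \<phi>"
  shows "prime_con ar (quot_alg A \<psi>) (con_quot \<psi> \<phi>)"
  unfolding prime_con_def
proof (intro conjI ballI impI)
  have \<phi>_Con: "\<phi> \<in> Con ar A" and "\<phi> \<noteq> Nabla A"
    using \<phi> by (auto simp: prime_con_def)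
  have lift: "con_lift A \<psi> (con_quot \<psi> \<phi>) = \<phi>"
    using con_lift_con_quot[OF \<psi> \<phi>_Con \<open>\<psi> \<subseteq> \<phi>\<close>] .
  show "con_quot \<psi> \<phi> \<in> Con ar (quot_alg A \<psi>)"
    using con_quot_Con[OF \<psi> \<phi>_Con \<open>\<psi> \<subseteq> \<phi>\<close>] .
  show "con_quot \<psi> \<phi> \<noteq> Nabla (quot_alg A \<psi>)"
    using lift con_lift_Nabla \<open>\<phi> \<noteq> Nabla A\<close> by metis
  fix \<alpha> \<beta>
  assume \<alpha>: "\<alpha> \<in> Con ar (quot_alg A \<psi>)" and \<beta>: "\<beta> \<in> Con ar (quot_alg A \<psi>)"
    and "commutator ar (quot_alg A \<psi>) \<alpha> \<beta> \<subseteq> con_quot \<psi> \<phi>"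
  then have "commutator ar A (con_lift A \<psi> \<alpha>) (con_lift A \<psi> \<beta>) \<subseteq> \<phi>"
    using commutator_con_lift_subset[OF A \<psi> \<alpha> \<beta>] con_lift_mono lift by blast
  then have "con_lift A \<psi> \<alpha> \<subseteq> \<phi> \<or> con_lift A \<psi> \<beta> \<subseteq> \<phi>"
    using \<phi> con_lift_Con[OF A \<psi> \<alpha>] con_lift_Con[OF A \<psi> \<beta>] unfolding prime_con_def by blast
  then show "\<alpha> \<subseteq> con_quot \<psi> \<phi> \<or> \<beta> \<subseteq> con_quot \<psi> \<phi>"
    using con_quot_mono con_quot_con_lift[OF \<psi> \<alpha>] con_quot_con_lift[OF \<psi> \<beta>] by metis
qed

lemma prime_con_lift_Delta:
  assumes A: "algebra ar A" and \<phi>: "prime_con ar (quot_alg A (Delta A)) \<phi>"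
  shows "prime_con ar A (con_lift A (Delta A) \<phi>)"
  unfolding prime_con_def
proof (intro conjI ballI impI)
  let ?\<Delta> = "Delta A"
  have \<Delta>: "?\<Delta> \<in> Con ar A"
    using A by (rule Delta_Con)
  have \<phi>_Con: "\<phi> \<in> Con ar (quot_alg A ?\<Delta>)" and "\<phi> \<noteq> Nabla (quot_alg A ?\<Delta>)"
    using \<phi> by (auto simp: prime_con_def)
  have quot: "con_quot ?\<Delta> (con_lift A ?\<Delta> \<phi>) = \<phi>"
    using con_quot_con_lift[OF \<Delta> \<phi>_Con] .
  show "con_lift A ?\<Delta> \<phi> \<in> Con ar A"
    using con_lift_Con[OF A \<Delta> \<phi>_Con] .
  show "con_lift A ?\<Delta> \<phi> \<noteq> Nabla A"
    using quot con_quot_Nabla[OF \<Delta>] \<open>\<phi> \<noteq> Nabla (quot_alg A ?\<Delta>)\<close> by metis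
  fix \<alpha> \<beta>
  assume \<alpha>: "\<alpha> \<in> Con ar A" and \<beta>: "\<beta> \<in> Con ar A"
    and "commutator ar A \<alpha> \<beta> \<subseteq> con_lift A ?\<Delta> \<phi>"
  then have "commutator ar (quot_alg A ?\<Delta>) (con_quot ?\<Delta> \<alpha>) (con_quot ?\<Delta> \<beta>) \<subseteq> \<phi>"
    using commutator_con_quot_Delta_subset[OF A \<alpha> \<beta>] con_quot_mono quot by blast
  then have "con_quot ?\<Delta> \<alpha> \<subseteq> \<phi> \<or> con_quot ?\<Delta> \<beta> \<subseteq> \<phi>"
    using \<phi> con_quot_Con[OF \<Delta> \<alpha> Delta_subset_Con[OF \<alpha>]] con_quot_Con[OF \<Delta> \<beta> Delta_subset_Con[OF \<beta>]]
    unfolding prime_con_def by blast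
  then show "\<alpha> \<subseteq> con_lift A ?\<Delta> \<phi> \<or> \<beta> \<subseteq> con_lift A ?\<Delta> \<phi>"
    using con_lift_mono con_lift_con_quot[OF \<Delta> \<alpha> Delta_subset_Con[OF \<alpha>]]
      con_lift_con_quot[OF \<Delta> \<beta> Delta_subset_Con[OF \<beta>]] by metis
qed

lemma semiprime_quot_alg:
  assumes A: "algebra ar A" and \<psi>: "\<psi> \<in> Con ar A" and rad: "radical ar A \<psi> \<subseteq> \<psi>"
  shows "semiprime ar (quot_alg A \<psi>)"
  unfolding semiprime_iff_radical_subset
proof (clarify)
  let ?Q = "quot_alg A \<psi>"
  fix X Y assume XY: "(X, Y) \<in> radical ar ?Q (Delta ?Q)"
  then have Q: "X \<in> carrier ?Q" "Y \<in> carrier ?Q"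
    by (auto simp: radical_def Nabla_def)
  have "(class_rep X, class_rep Y) \<in> \<phi>" if "prime_con ar A \<phi>" "\<psi> \<subseteq> \<phi>" for \<phi>
  proof -
    have "prime_con ar ?Q (con_quot \<psi> \<phi>)"
      using prime_con_quot[OF A \<psi> that] .
    then have "(X, Y) \<in> con_quot \<psi> \<phi>"
      using XY Delta_subset_Con unfolding radical_def prime_con_def by blast
    then show ?thesis
      using con_quot_iff[OF \<psi> _ \<open>\<psi> \<subseteq> \<phi>\<close> Q] that(1) by (simp add: prime_con_def)
  qed
  then have "(class_rep X, class_rep Y) \<in> radical ar A \<psi>"
    using class_rep_in_carrier[OF \<psi> Q(1)] class_rep_in_carrier[OF \<psi> Q(2)]
    by (auto simp: radical_def Nabla_def)
  then have "\<psi> `` {class_rep X} = \<psi> `` {class_rep Y}"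
    using rad class_eq_iff[OF \<psi>] class_rep_in_carrier[OF \<psi> Q(1)] class_rep_in_carrier[OF \<psi> Q(2)]
    by blast
  then show "(X, Y) \<in> Delta ?Q"
    using class_of_class_rep[OF \<psi>] Q by (auto simp: Delta_def)
qed

lemma semiprime_if_semiprime_quot_alg_Delta:
  assumes A: "algebra ar A" and sp: "semiprime ar (quot_alg A (Delta A))"
  shows "semiprime ar A"
  unfolding semiprime_iff_radical_subset
proof (clarify)
  let ?\<Delta> = "Delta A"
  let ?Q = "quot_alg A ?\<Delta>"
  have \<Delta>: "?\<Delta> \<in> Con ar A"
    using A by (rule Delta_Con)
  fix x y assume xy: "(x, y) \<in> radical ar A ?\<Delta>"
  then have carr: "x \<in> carrier A" "y \<in> carrier A"
    by (auto simp: radical_def Nabla_def)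
  have "(?\<Delta> `` {x}, ?\<Delta> `` {y}) \<in> \<phi>" if "prime_con ar ?Q \<phi>" for \<phi>
  proof -
    have "prime_con ar A (con_lift A ?\<Delta> \<phi>)"
      using prime_con_lift_Delta[OF A that] .
    then have "(x, y) \<in> con_lift A ?\<Delta> \<phi>"
      using xy Delta_subset_Con unfolding radical_def prime_con_def by blast
    then show ?thesis
      by (simp add: con_lift_def)
  qed
  then have "(?\<Delta> `` {x}, ?\<Delta> `` {y}) \<in> radical ar ?Q (Delta ?Q)"
    using class_in_quot_alg carr by (auto simp: radical_def Nabla_def)
  then have "?\<Delta> `` {x} = ?\<Delta> `` {y}"
    using sp by (auto simp: semiprime_def Delta_def)
  then show "(x, y) \<in> ?\<Delta>"
    using class_eq_iff[OF \<Delta> carr] by simp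
qed

section \<open>Annihilators\<close>

lemma annihilator_Con: "algebra ar A \<Longrightarrow> annihilator ar A \<theta> \<in> Con ar A"
  unfolding annihilator_def using Con_subset_Nabla by (blast intro: Cg_Con)

lemma annihilator_subset_prime:
  assumes \<phi>: "prime_con ar A \<phi>" and \<theta>: "\<theta> \<in> Con ar A" "\<not> \<theta> \<subseteq> \<phi>"
  shows "annihilator ar A \<theta> \<subseteq> \<phi>"
  unfolding annihilator_def
proof (rule Cg_least)
  show "\<phi> \<in> Con ar A"
    using \<phi> by (simp add: prime_con_def)
  show "\<Union>{\<alpha> \<in> Con ar A. commutator ar A \<alpha> \<theta> = Delta A} \<subseteq> \<phi>"
  proof (rule Union_least)
    fix \<alpha> assume "\<alpha> \<in> {\<alpha> \<in> Con ar A. commutator ar A \<alpha> \<theta> = Delta A}"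
    then have "\<alpha> \<in> Con ar A" and "commutator ar A \<alpha> \<theta> \<subseteq> \<phi>"
      using Delta_subset_Con[OF \<open>\<phi> \<in> Con ar A\<close>] by auto
    then show "\<alpha> \<subseteq> \<phi>"
      using \<phi> \<theta> unfolding prime_con_def by blast
  qed
qed

lemma radical_annihilator_subset:
  assumes A: "algebra ar A" and sp: "semiprime ar A" and \<theta>: "\<theta> \<in> Con ar A"
  shows "radical ar A (annihilator ar A \<theta>) \<subseteq> annihilator ar A \<theta>"
proof -
  define P where "P = {\<phi>. prime_con ar A \<phi> \<and> \<not> \<theta> \<subseteq> \<phi>}"
  define \<rho> where "\<rho> = Nabla A \<inter> \<Inter>P"
  have \<rho>_Con: "\<rho> \<in> Con ar A"
    unfolding \<rho>_def P_def by (rule Inter_Con[OF A]) (auto simp: prime_con_def)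
  have "commutator ar A \<rho> \<theta> \<subseteq> \<phi>" if "prime_con ar A \<phi>" for \<phi>
  proof (cases "\<theta> \<subseteq> \<phi>")
    case True
    then show ?thesis
      using commutator_subset_right[OF \<rho>_Con \<theta>] by blast
  next
    case False
    with that have "\<rho> \<subseteq> \<phi>"
      unfolding \<rho>_def P_def by blast
    then show ?thesis
      using commutator_subset_left[OF \<rho>_Con \<theta>] by blast
  qed
  then have "commutator ar A \<rho> \<theta> \<subseteq> radical ar A (Delta A)"
    using commutator_subset_right[OF \<rho>_Con \<theta>] Con_subset_Nabla[OF \<theta>]
    unfolding radical_def by blast
  then have "commutator ar A \<rho> \<theta> = Delta A"
    using sp Delta_subset_commutator unfolding semiprime_iff_radical_subset by blast
  then have "\<rho> \<in> {\<alpha> \<in> Con ar A. commutator ar A \<alpha> \<theta> = Delta A}"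
    using \<rho>_Con by simp
  then have "\<rho> \<subseteq> \<Union>{\<alpha> \<in> Con ar A. commutator ar A \<alpha> \<theta> = Delta A}"
    by (rule Union_upper)
  also have "\<dots> \<subseteq> annihilator ar A \<theta>"
    unfolding annihilator_def by (rule Cg_upper)
  finally have "\<rho> \<subseteq> annihilator ar A \<theta>" .
  moreover have "P \<subseteq> {\<phi>. prime_con ar A \<phi> \<and> annihilator ar A \<theta> \<subseteq> \<phi>}"
  proof
    fix \<phi> assume "\<phi> \<in> P"
    then show "\<phi> \<in> {\<phi>. prime_con ar A \<phi> \<and> annihilator ar A \<theta> \<subseteq> \<phi>}"
      using annihilator_subset_prime[OF _ \<theta>] by (simp add: P_def)
  qed
  then have "radical ar A (annihilator ar A \<theta>) \<subseteq> \<rho>"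
    unfolding radical_def \<rho>_def using Inter_anti_mono by blast
  ultimately show ?thesis
    by (rule order_trans[rotated])
qed

lemma annihilator_Nabla:
  assumes A: "algebra ar A" and comm_top: "\<forall>\<theta>\<in>Con ar A. commutator ar A \<theta> (Nabla A) = \<theta>"
  shows "annihilator ar A (Nabla A) = Delta A"
proof -
  have "{\<alpha> \<in> Con ar A. commutator ar A \<alpha> (Nabla A) = Delta A} = {Delta A}"
    using comm_top Delta_Con[OF A] by auto
  then have "annihilator ar A (Nabla A) = Cg ar A (Delta A)"
    by (simp add: annihilator_def)
  also have "\<dots> = Delta A"
    using Cg_least[OF Delta_Con[OF A]] Cg_upper by blast
  finally show ?thesis .
qed

theorem mainTheorem4:
  fixes ar :: "'f \<Rightarrow> nat"
    and \<Sigma> :: "('f trm \<times> 'f trm) set"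
    and A :: "('f, 'a) alg"
  assumes wf_ids: "\<forall>(s, t)\<in>\<Sigma>. wf_trm ar s \<and> wf_trm ar t"
    and CM: "\<forall>M :: ('f, 'f trm set) alg. algebra ar M \<and> satisfies M \<Sigma> \<longrightarrow> cong_modular ar M"
    and A_alg: "algebra ar A"
    and A_in: "satisfies A \<Sigma>"
    and comm_top: "\<forall>\<theta>\<in>Con ar A. commutator ar A \<theta> (Nabla A) = \<theta>"
  shows "(\<forall>\<theta>\<in>Con ar A. semiprime ar (quot_alg A (annihilator ar A \<theta>))) \<longleftrightarrow> semiprime ar A"
proof
  assume "\<forall>\<theta>\<in>Con ar A. semiprime ar (quot_alg A (annihilator ar A \<theta>))"
  then have "semiprime ar (quot_alg A (Delta A))"
    using Nabla_Con[OF A_alg] annihilator_Nabla[OF A_alg comm_top] by metis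
  then show "semiprime ar A"
    by (rule semiprime_if_semiprime_quot_alg_Delta[OF A_alg])
next
  assume "semiprime ar A"
  then show "\<forall>\<theta>\<in>Con ar A. semiprime ar (quot_alg A (annihilator ar A \<theta>))"
    using semiprime_quot_alg[OF A_alg annihilator_Con[OF A_alg] radical_annihilator_subset[OF A_alg]]
    by blast
qed

end
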